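(* For any two finite sets $A_1$ and $A_2$ of lines in $\mathbb{R}^2$, there exists a line $\ell$, bounding closed halfplanes $\ell^+$ and $\ell^-$, and sets $A_i^\sigma\subseteq A_i$ for $i\in\{1,2\}$ and $\sigma\in\{+,-\}$, such that $|A_i^\sigma|\ge |A_i|^{1/2}$ and $V(A_i^\sigma)\subseteq \ell^\sigma$.
   Context: For a finite set $A$ of lines in $\mathbb{R}^2$, $V(A)$ denotes the set of all intersection points of pairs of lines of $A$. *)

theory Defs
  imports Complex_Main
begin

definition line_eq :: "real \<Rightarrow> real \<Rightarrow> real \<Rightarrow> (real \<times> real) set" where
  "line_eq a b c = {(x, y). a * x + b * y = c}"

definition is_line :: "(real \<times> real) set \<Rightarrow> bool" where
  "is_line L \<longleftrightarrow> (\<exists>a b c. (a, b) \<noteq> (0, 0) \<and> L = line_eq a b c)"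

definition V :: "(real \<times> real) set set \<Rightarrow> (real \<times> real) set" where
  "V A = {p. \<exists>L\<in>A. \<exists>M\<in>A. L \<noteq> M \<and> p \<in> L \<and> p \<in> M}"

definition halfplane_plus :: "real \<Rightarrow> real \<Rightarrow> real \<Rightarrow> (real \<times> real) set" where
  "halfplane_plus a b c = {(x, y). a * x + b * y \<ge> c}"

definition halfplane_minus :: "real \<Rightarrow> real \<Rightarrow> real \<Rightarrow> (real \<times> real) set" where
  "halfplane_minus a b c = {(x, y). a * x + b * y \<le> c}"

end

theory Submission
  imports Defs
begin

text \<open>
  Combinatorially, fix any line
  a x + b y = c. Order the lines of A so that comparable lines meet on the minus side and
  incomparable ones on the plus side; by Mirsky's theorem there is a chain or an antichain of
  size sqrt |A|, giving the dichotomy: some large subset has all its vertices on one closed side.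
  Topologically, rotate the direction (cos (pi t), sin (pi t)) from t = 0 to t = 1. For fixed t
  the offsets c for which both sides are served form an interval [lower t, upper t]; these
  endpoints depend continuously on t and are exchanged (up to sign) between t = 0 and t = 1.
  By the intermediate value theorem the midpoints of the intervals of A1 and A2 coincide at some
  t, and that line works for both families.
\<close>

definition lt_chain :: "('a \<Rightarrow> 'a \<Rightarrow> bool) \<Rightarrow> 'a set \<Rightarrow> bool" where
  "lt_chain lt C \<longleftrightarrow> (\<forall>x\<in>C. \<forall>y\<in>C. x \<noteq> y \<longrightarrow> lt x y \<or> lt y x)"

definition lt_antichain :: "('a \<Rightarrow> 'a \<Rightarrow> bool) \<Rightarrow> 'a set \<Rightarrow> bool" where
  "lt_antichain lt C \<longleftrightarrow> (\<forall>x\<in>C. \<forall>y\<in>C. \<not> lt x y)"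

text \<open>Mirsky's height function: if every chain has at most m elements, mapping each x to the
  size of a longest chain ending in x is strictly monotone with values in {1..m}.\<close>

lemma height_function:
  assumes fin: "finite X" and irr: "\<forall>x\<in>X. \<not> lt x x"
    and tr: "\<forall>x\<in>X. \<forall>y\<in>X. \<forall>z\<in>X. lt x y \<longrightarrow> lt y z \<longrightarrow> lt x z"
    and chains: "\<And>C. C \<subseteq> X \<Longrightarrow> lt_chain lt C \<Longrightarrow> card C \<le> m"
  obtains h where "\<And>x. x \<in> X \<Longrightarrow> h x \<in> {1..m}"
    and "\<And>x y. x \<in> X \<Longrightarrow> y \<in> X \<Longrightarrow> lt x y \<Longrightarrow> h x < h y"
proof -
  define tops where "tops x = {C. C \<subseteq> X \<and> lt_chain lt C \<and> x \<in> C \<and> (\<forall>y\<in>C. y = x \<or> lt y x)}" for x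
  define h where "h x = Max (card ` tops x)" for x
  have tops_fin: "finite (tops x)" for x
    by (rule finite_subset[of _ "Pow X"]) (auto simp: tops_def fin)
  have singleton_top: "{x} \<in> tops x" if "x \<in> X" for x
    using that by (auto simp: tops_def lt_chain_def)
  have h_attained: "h x \<in> card ` tops x" if "x \<in> X" for x
    unfolding h_def using tops_fin singleton_top[OF that] by (intro Max_in) auto
  have h_ge: "card C \<le> h x" if "C \<in> tops x" for C x
    unfolding h_def using tops_fin that by (intro Max_ge) auto
  have h_range: "h x \<in> {1..m}" if "x \<in> X" for x
    using h_ge[OF singleton_top[OF that]] h_attained[OF that] chains by (auto simp: tops_def)
  have h_mono: "h x < h y" if xy: "x \<in> X" "y \<in> X" "lt x y" for x y
  proof -
    obtain C where C: "C \<in> tops x" "card C = h x" using h_attained[OF xy(1)] by auto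
    hence CX: "C \<subseteq> X" "lt_chain lt C" "\<forall>z\<in>C. z = x \<or> lt z x" by (auto simp: tops_def)
    have below_y: "lt z y" if "z \<in> C" for z
      using CX that xy tr by (metis subsetD)
    hence "y \<notin> C" using irr xy by blast
    have "insert y C \<in> tops y"
      using CX below_y xy unfolding tops_def lt_chain_def by auto
    hence "card (insert y C) \<le> h y" by (rule h_ge)
    moreover have "card (insert y C) = Suc (h x)"
      using \<open>y \<notin> C\<close> C CX fin by (simp add: finite_subset)
    ultimately show ?thesis by simp
  qed
  from h_range h_mono show thesis by (rule that)
qed

text \<open>Consequently X is covered by m antichains (the level sets of the height function).\<close>

lemma card_le_chain_antichain:
  assumes fin: "finite X" and irr: "\<forall>x\<in>X. \<not> lt x x"
    and tr: "\<forall>x\<in>X. \<forall>y\<in>X. \<forall>z\<in>X. lt x y \<longrightarrow> lt y z \<longrightarrow> lt x z"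
    and chains: "\<And>C. C \<subseteq> X \<Longrightarrow> lt_chain lt C \<Longrightarrow> card C \<le> m"
    and antichains: "\<And>C. C \<subseteq> X \<Longrightarrow> lt_antichain lt C \<Longrightarrow> card C \<le> n"
  shows "card X \<le> m * n"
proof -
  obtain h where h_range: "\<And>x. x \<in> X \<Longrightarrow> h x \<in> {1..m}"
    and h_mono: "\<And>x y. x \<in> X \<Longrightarrow> y \<in> X \<Longrightarrow> lt x y \<Longrightarrow> h x < h y"
    using height_function[OF fin irr tr chains] by blast
  define level where "level v = {x\<in>X. h x = v}" for v
  have "card X = card (\<Union>v\<in>{1..m}. level v)"
    using h_range by (intro arg_cong[where f=card]) (auto simp: level_def)
  also have "\<dots> \<le> (\<Sum>v\<in>{1..m}. card (level v))"
    by (rule card_UN_le) simp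
  also have "\<dots> \<le> (\<Sum>v\<in>{1..m}. n)"
    using h_mono by (intro sum_mono antichains) (fastforce simp: level_def lt_antichain_def)+
  finally show ?thesis by simp
qed

lemma chain_or_antichain_sqrt:
  assumes fin: "finite X" and irr: "\<forall>x\<in>X. \<not> lt x x"
    and tr: "\<forall>x\<in>X. \<forall>y\<in>X. \<forall>z\<in>X. lt x y \<longrightarrow> lt y z \<longrightarrow> lt x z"
  shows "\<exists>C\<subseteq>X. sqrt (real (card X)) \<le> real (card C) \<and> (lt_chain lt C \<or> lt_antichain lt C)"
proof (rule ccontr)
  assume small: "\<not> ?thesis"
  define m where "m = Max (card ` {C. C \<subseteq> X \<and> lt_chain lt C})"
  define n where "n = Max (card ` {C. C \<subseteq> X \<and> lt_antichain lt C})"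
  have fin_subsets: "finite {C. C \<subseteq> X \<and> P C}" for P
    by (rule finite_subset[of _ "Pow X"]) (auto simp: fin)
  have "m \<in> card ` {C. C \<subseteq> X \<and> lt_chain lt C}"
    unfolding m_def using fin_subsets by (intro Max_in) (auto simp: lt_chain_def)
  then obtain C where "C \<subseteq> X" "lt_chain lt C" "card C = m" by blast
  hence m_small: "real m < sqrt (real (card X))" using small by (meson not_le)
  have "n \<in> card ` {C. C \<subseteq> X \<and> lt_antichain lt C}"
    unfolding n_def using fin_subsets by (intro Max_in) (auto simp: lt_antichain_def)
  then obtain C where "C \<subseteq> X" "lt_antichain lt C" "card C = n" by blast
  hence n_small: "real n < sqrt (real (card X))" using small by (meson not_le)
  have "card C \<le> m" if "C \<subseteq> X" "lt_chain lt C" for C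
    unfolding m_def using fin_subsets that by (intro Max_ge) auto
  moreover have "card C \<le> n" if "C \<subseteq> X" "lt_antichain lt C" for C
    unfolding n_def using fin_subsets that by (intro Max_ge) auto
  ultimately have "card X \<le> m * n"
    using card_le_chain_antichain[OF fin irr tr] by blast
  hence "real (card X) \<le> real m * real n" by (metis of_nat_le_iff of_nat_mult)
  also have "\<dots> < sqrt (real (card X)) * sqrt (real (card X))"
    using m_small n_small by (intro mult_strict_mono') auto
  finally show False by simp
qed

definition large_subset :: "'a set \<Rightarrow> 'a set \<Rightarrow> bool" where
  "large_subset A S \<longleftrightarrow> S \<subseteq> A \<and> sqrt (real (card A)) \<le> real (card S)"

text \<open>Coordinates of a point with respect to a direction (a,b): its position across the lines
  a x + b y = const and its position along them.\<close>

definition normal_coord :: "real \<Rightarrow> real \<Rightarrow> real \<times> real \<Rightarrow> real" where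
  "normal_coord a b p = a * fst p + b * snd p"

definition tangent_coord :: "real \<Rightarrow> real \<Rightarrow> real \<times> real \<Rightarrow> real" where
  "tangent_coord a b p = a * snd p - b * fst p"

lemma halfplane_plus_iff: "p \<in> halfplane_plus a b c \<longleftrightarrow> c \<le> normal_coord a b p"
  by (cases p) (simp add: halfplane_plus_def normal_coord_def)

lemma halfplane_minus_iff: "p \<in> halfplane_minus a b c \<longleftrightarrow> normal_coord a b p \<le> c"
  by (cases p) (simp add: halfplane_minus_def normal_coord_def)

lemma line_eq_rotated:
  assumes "(a, b) \<noteq> (0, 0)"
  shows "p \<in> line_eq u v w \<longleftrightarrow>
    (u * a + v * b) * normal_coord a b p + (v * a - u * b) * tangent_coord a b p = (a\<^sup>2 + b\<^sup>2) * w"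
proof -
  obtain x y where p: "p = (x, y)" by (cases p)
  have N: "a\<^sup>2 + b\<^sup>2 \<noteq> 0" using assms by simp
  have "(u * a + v * b) * (a * x + b * y) + (v * a - u * b) * (a * y - b * x) = (a\<^sup>2 + b\<^sup>2) * (u * x + v * y)"
    by (simp add: algebra_simps power2_eq_square)
  thus ?thesis using N by (auto simp: p line_eq_def normal_coord_def tangent_coord_def)
qed

text \<open>The rotated coefficient vector is nonzero: its squared length is (a^2 + b^2) (u^2 + v^2).\<close>

lemma rotated_coeffs_nonzero:
  fixes a b u v :: real
  assumes "(a, b) \<noteq> (0, 0)" and "(u, v) \<noteq> (0, 0)"
  shows "(u * a + v * b, v * a - u * b) \<noteq> (0, 0)"
proof
  assume "(u * a + v * b, v * a - u * b) = (0, 0)"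
  hence "(u * a + v * b)\<^sup>2 + (v * a - u * b)\<^sup>2 = 0" by simp
  moreover have "(u * a + v * b)\<^sup>2 + (v * a - u * b)\<^sup>2 = (a\<^sup>2 + b\<^sup>2) * (u\<^sup>2 + v\<^sup>2)"
    by (simp add: algebra_simps power2_eq_square)
  moreover have "(a\<^sup>2 + b\<^sup>2) * (u\<^sup>2 + v\<^sup>2) > 0"
    using assms by (intro mult_pos_pos) (simp_all add: sum_power2_gt_zero_iff)
  ultimately show False by linarith
qed

lemma line_cases:
  assumes "is_line L" and ab: "(a, b) \<noteq> (0, 0)"
  shows "(\<exists>m k. L = {p. tangent_coord a b p = m * normal_coord a b p + k}) \<or>
         (\<exists>d. L = {p. normal_coord a b p = d})"
proof -
  obtain u v w where uv: "(u, v) \<noteq> (0, 0)" and L: "L = line_eq u v w"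
    using assms(1) unfolding is_line_def by auto
  define \<alpha> where "\<alpha> = u * a + v * b"
  define \<beta> where "\<beta> = v * a - u * b"
  have L_rot: "L = {p. \<alpha> * normal_coord a b p + \<beta> * tangent_coord a b p = (a\<^sup>2 + b\<^sup>2) * w}"
    using line_eq_rotated[OF ab] unfolding L \<alpha>_def \<beta>_def by blast
  show ?thesis
  proof (cases "\<beta> = 0")
    case True
    hence "\<alpha> \<noteq> 0" using rotated_coeffs_nonzero[OF ab uv] unfolding \<alpha>_def \<beta>_def by auto
    hence "L = {p. normal_coord a b p = (a\<^sup>2 + b\<^sup>2) * w / \<alpha>}"
      using L_rot True by (auto simp: field_simps)
    thus ?thesis by blast
  next
    case False
    have "\<alpha> * x + \<beta> * y = K \<longleftrightarrow> y = (- \<alpha> / \<beta>) * x + K / \<beta>" for x y K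
      using False by (auto simp: field_simps)
    hence "L = {p. tangent_coord a b p = (- \<alpha> / \<beta>) * normal_coord a b p + (a\<^sup>2 + b\<^sup>2) * w / \<beta>}"
      using L_rot by simp
    thus ?thesis by blast
  qed
qed

locale coordinatized_lines =
  fixes A :: "(real \<times> real) set set"
    and s t :: "real \<times> real \<Rightarrow> real"
    and slanted :: "(real \<times> real) set \<Rightarrow> bool"
    and slope offset level :: "(real \<times> real) set \<Rightarrow> real"
  assumes slanted_line: "L \<in> A \<Longrightarrow> slanted L \<Longrightarrow> L = {p. t p = slope L * s p + offset L}"
    and level_line: "L \<in> A \<Longrightarrow> \<not> slanted L \<Longrightarrow> L = {p. s p = level L}"
begin

text \<open>The t-coordinate at which a slanted line crosses the level line s = c.\<close>

definition crossing :: "real \<Rightarrow> (real \<times> real) set \<Rightarrow> real" where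
  "crossing c L = slope L * c + offset L"

definition below :: "real \<Rightarrow> (real \<times> real) set \<Rightarrow> (real \<times> real) set \<Rightarrow> bool" where
  "below c L M \<longleftrightarrow>
     (slanted L \<and> slanted M \<and> slope L \<le> slope M \<and> crossing c L \<le> crossing c M \<and>
        (slope L, crossing c L) \<noteq> (slope M, crossing c M)) \<or>
     (\<not> slanted L \<and> level L \<le> c \<and> (slanted M \<or> level L < level M \<and> level M \<le> c))"

lemma below_irrefl: "\<not> below c L L"
  by (auto simp: below_def)

lemma below_trans: "below c L M \<Longrightarrow> below c M N \<Longrightarrow> below c L N"
  unfolding below_def by (elim disjE conjE) auto

lemma on_slanted: "L \<in> A \<Longrightarrow> slanted L \<Longrightarrow> p \<in> L \<Longrightarrow> t p = slope L * s p + offset L"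
  using slanted_line by blast

lemma on_level: "L \<in> A \<Longrightarrow> \<not> slanted L \<Longrightarrow> p \<in> L \<Longrightarrow> s p = level L"
  using level_line by blast

lemma crossing_diff:
  assumes "L \<in> A" "M \<in> A" "slanted L" "slanted M" "p \<in> L" "p \<in> M"
  shows "crossing c L - crossing c M = (slope L - slope M) * (c - s p)"
  using on_slanted[OF assms(1,3,5)] on_slanted[OF assms(2,4,6)]
  by (simp add: crossing_def algebra_simps)

lemma slanted_eqI:
  assumes "L \<in> A" "M \<in> A" "slanted L" "slanted M"
    and "slope L = slope M" "crossing c L = crossing c M"
  shows "L = M"
  using assms slanted_line[OF assms(1,3)] slanted_line[OF assms(2,4)] by (simp add: crossing_def)

lemma below_meet:
  assumes "L \<in> A" "M \<in> A" "below c L M" "p \<in> L" "p \<in> M"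
  shows "s p \<le> c"
proof (cases "slanted L")
  case True
  hence M: "slanted M" "slope L \<le> slope M" "crossing c L \<le> crossing c M"
    and ne: "(slope L, crossing c L) \<noteq> (slope M, crossing c M)"
    using assms(3) by (auto simp: below_def)
  have diff: "crossing c L - crossing c M = (slope L - slope M) * (c - s p)"
    using crossing_diff[OF assms(1,2) True M(1) assms(4,5)] .
  hence "slope L < slope M" using M ne by fastforce
  thus ?thesis using diff M(3) by (smt (verit) mult_neg_neg)
next
  case False
  thus ?thesis using assms(3) on_level[OF assms(1) False assms(4)] by (auto simp: below_def)
qed

lemma incomparable_meet:
  assumes "L \<in> A" "M \<in> A" "L \<noteq> M" "\<not> below c L M" "\<not> below c M L" "p \<in> L" "p \<in> M"
  shows "c \<le> s p"
proof (rule ccontr)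
  assume "\<not> c \<le> s p"
  hence pos: "c - s p > 0" by simp
  consider "slanted L" "slanted M" | "slanted L" "\<not> slanted M" | "\<not> slanted L" "slanted M"
    | "\<not> slanted L" "\<not> slanted M" by blast
  thus False
  proof cases
    case 1
    have diff: "crossing c L - crossing c M = (slope L - slope M) * (c - s p)"
      using crossing_diff[OF assms(1,2) 1 assms(6,7)] .
    have ne: "(slope L, crossing c L) \<noteq> (slope M, crossing c M)"
      using slanted_eqI[OF assms(1,2) 1] assms(3) by auto
    show False
    proof (cases "slope L \<le> slope M")
      case True
      hence "crossing c L \<le> crossing c M" using diff pos by (smt (verit) mult_nonpos_nonneg)
      thus False using assms(4) 1 True ne by (auto simp: below_def)
    next
      case False
      hence "crossing c M \<le> crossing c L" using diff pos by (smt (verit) mult_nonneg_nonneg)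
      thus False using assms(5) 1 False ne by (auto simp: below_def)
    qed
  next
    case 2
    thus False using assms(5) pos on_level[OF assms(2) _ assms(7)] by (auto simp: below_def)
  next
    case 3
    thus False using assms(4) pos on_level[OF assms(1) _ assms(6)] by (auto simp: below_def)
  next
    case 4
    hence "L = {p. s p = level M}" "M = {p. s p = level M}"
      using level_line assms on_level by metis+
    thus False using assms(3) by simp
  qed
qed

lemma chain_meets_below:
  assumes "C \<subseteq> A" "lt_chain (below c) C" "p \<in> V C"
  shows "s p \<le> c"
proof -
  obtain L M where LM: "L \<in> C" "M \<in> C" "L \<noteq> M" "p \<in> L" "p \<in> M"
    using assms(3) unfolding V_def by auto
  have "L \<in> A" "M \<in> A" using LM assms(1) by auto
  moreover have "below c L M \<or> below c M L" using assms(2) LM unfolding lt_chain_def by blast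
  ultimately show ?thesis using below_meet[of L M c p] below_meet[of M L c p] LM by blast
qed

lemma antichain_meets_above:
  assumes "C \<subseteq> A" "lt_antichain (below c) C" "p \<in> V C"
  shows "c \<le> s p"
proof -
  obtain L M where LM: "L \<in> C" "M \<in> C" "L \<noteq> M" "p \<in> L" "p \<in> M"
    using assms(3) unfolding V_def by auto
  have "L \<in> A" "M \<in> A" using LM assms(1) by auto
  moreover have "\<not> below c L M" "\<not> below c M L" using assms(2) LM unfolding lt_antichain_def by blast+
  ultimately show ?thesis using incomparable_meet LM by blast
qed

lemma large_subset_one_side:
  assumes "finite A"
  shows "\<exists>C. large_subset A C \<and> ((\<forall>p\<in>V C. s p \<le> c) \<or> (\<forall>p\<in>V C. c \<le> s p))"
proof -
  have irr: "\<forall>L\<in>A. \<not> below c L L" using below_irrefl by blast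
  have tr: "\<forall>L\<in>A. \<forall>M\<in>A. \<forall>N\<in>A. below c L M \<longrightarrow> below c M N \<longrightarrow> below c L N"
    using below_trans by blast
  obtain C where "C \<subseteq> A" "sqrt (real (card A)) \<le> real (card C)"
    and "lt_chain (below c) C \<or> lt_antichain (below c) C"
    using chain_or_antichain_sqrt[OF assms irr tr] by blast
  thus ?thesis
    using chain_meets_below[of C c] antichain_meets_above[of C c] unfolding large_subset_def by blast
qed

end

lemma line_coordinates:
  assumes lines: "\<forall>L\<in>A. is_line L" and ab: "(a, b) \<noteq> (0, 0)"
  obtains slanted slope offset level
  where "coordinatized_lines A (normal_coord a b) (tangent_coord a b) slanted slope offset level"
proof -
  define slanted where
    "slanted L \<longleftrightarrow> (\<exists>m k. L = {p. tangent_coord a b p = m * normal_coord a b p + k})" for L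
  have "\<forall>L. \<exists>q. slanted L \<longrightarrow>
      L = {p. tangent_coord a b p = fst q * normal_coord a b p + snd q}"
    unfolding slanted_def by auto
  then obtain q where q: "\<forall>L. slanted L \<longrightarrow>
      L = {p. tangent_coord a b p = fst (q L) * normal_coord a b p + snd (q L)}"
    by (rule choice[THEN exE])
  have "\<forall>L. \<exists>d. L \<in> A \<and> \<not> slanted L \<longrightarrow> L = {p. normal_coord a b p = d}"
    using line_cases[OF _ ab] lines unfolding slanted_def by blast
  then obtain d where d: "\<forall>L. L \<in> A \<and> \<not> slanted L \<longrightarrow> L = {p. normal_coord a b p = d L}"
    by (rule choice[THEN exE])
  show thesis
    by (rule that[of slanted "\<lambda>L. fst (q L)" "\<lambda>L. snd (q L)" d], unfold_locales) (use q d in blast)+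
qed

lemma dichotomy:
  assumes "finite A" "\<forall>L\<in>A. is_line L" "(a, b) \<noteq> (0, 0)"
  shows "(\<exists>S. large_subset A S \<and> V S \<subseteq> halfplane_plus a b c) \<or>
         (\<exists>S. large_subset A S \<and> V S \<subseteq> halfplane_minus a b c)"
proof -
  obtain slanted slope offset level where
    "coordinatized_lines A (normal_coord a b) (tangent_coord a b) slanted slope offset level"
    using line_coordinates[OF assms(2,3)] .
  then interpret coordinatized_lines A "normal_coord a b" "tangent_coord a b" slanted slope offset level .
  obtain C where C: "large_subset A C"
    and "(\<forall>p\<in>V C. normal_coord a b p \<le> c) \<or> (\<forall>p\<in>V C. c \<le> normal_coord a b p)"
    using large_subset_one_side[OF assms(1), of c] by blast
  hence "V C \<subseteq> halfplane_minus a b c \<or> V C \<subseteq> halfplane_plus a b c"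
    by (auto simp: halfplane_plus_iff halfplane_minus_iff)
  thus ?thesis using C by blast
qed

lemma line_through_two_points:
  assumes "is_line L" "p \<in> L" "q \<in> L" "p \<noteq> q"
  shows "L = {r. (fst r - fst p) * (snd q - snd p) = (snd r - snd p) * (fst q - fst p)}"
proof -
  obtain u v w where uv: "(u, v) \<noteq> (0, 0)" and L: "L = line_eq u v w"
    using assms(1) unfolding is_line_def by auto
  define d1 d2 where "d1 = fst q - fst p" and "d2 = snd q - snd p"
  have pL: "u * fst p + v * snd p = w" and qL: "u * fst q + v * snd q = w"
    using assms(2,3) unfolding L line_eq_def by (auto simp: case_prod_beta)
  have d: "u * d1 + v * d2 = 0" using pL qL unfolding d1_def d2_def by (simp add: algebra_simps)
  have d_nz: "(d1, d2) \<noteq> (0, 0)" using assms(4) unfolding d1_def d2_def by (auto simp: prod_eq_iff)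
  have "r \<in> L \<longleftrightarrow> (fst r - fst p) * d2 = (snd r - snd p) * d1" for r
  proof -
    define E D where "E = u * (fst r - fst p) + v * (snd r - snd p)"
      and "D = (fst r - fst p) * d2 - (snd r - snd p) * d1"
    have rL: "r \<in> L \<longleftrightarrow> E = 0"
      using pL unfolding L line_eq_def E_def by (auto simp: case_prod_beta algebra_simps)
    have "u * D = d2 * E - (snd r - snd p) * (u * d1 + v * d2)"
      and "v * D = (fst r - fst p) * (u * d1 + v * d2) - d1 * E"
      unfolding D_def E_def by (simp_all add: algebra_simps)
    hence uD: "u * D = d2 * E" and vD: "v * D = - (d1 * E)" using d by simp_all
    have "E = 0 \<longleftrightarrow> D = 0"
      using uD vD uv d_nz by auto
    thus ?thesis unfolding rL D_def by simp
  qed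
  thus ?thesis unfolding d1_def d2_def by blast
qed

lemma distinct_lines_meet_finite:
  assumes "is_line L" "is_line M" "L \<noteq> M"
  shows "finite (L \<inter> M)"
proof (cases "L \<inter> M = {}")
  case False
  then obtain p where p: "p \<in> L" "p \<in> M" by auto
  have "L \<inter> M \<subseteq> {p}"
  proof
    fix q assume q: "q \<in> L \<inter> M"
    show "q \<in> {p}"
    proof (rule ccontr)
      assume "q \<notin> {p}"
      hence pq: "p \<noteq> q" by auto
      have "L = M"
        using line_through_two_points[OF assms(1) p(1) IntD1[OF q] pq]
          line_through_two_points[OF assms(2) p(2) IntD2[OF q] pq] by (rule trans[OF _ sym])
      thus False using assms(3) by simp
    qed
  qed
  thus ?thesis using finite_subset by blast
qed simp

lemma V_finite:
  assumes "finite S" "\<forall>L\<in>S. is_line L"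
  shows "finite (V S)"
proof -
  have "V S = (\<Union>L\<in>S. \<Union>M\<in>S - {L}. L \<inter> M)" unfolding V_def by auto
  moreover have "finite (\<Union>L\<in>S. \<Union>M\<in>S - {L}. L \<inter> M)"
    using assms by (intro finite_UN_I) (auto intro: distinct_lines_meet_finite)
  ultimately show ?thesis by simp
qed

lemma sqrt_le_self_nat: "sqrt (real n) \<le> real n"
proof (cases "n = 0")
  case False
  hence "sqrt (real n) \<le> sqrt (real n * real n)" by (intro real_sqrt_le_mono) simp
  thus ?thesis by simp
qed simp

lemma continuous_on_Max_finite:
  fixes f :: "'i \<Rightarrow> real \<Rightarrow> real"
  assumes "finite I" "I \<noteq> {}" "\<And>i. i \<in> I \<Longrightarrow> continuous_on T (f i)"
  shows "continuous_on T (\<lambda>t. Max ((\<lambda>i. f i t) ` I))"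
  using assms
proof (induction I rule: finite_ne_induct)
  case (insert x F)
  have "continuous_on T (\<lambda>t. max (f x t) (Max ((\<lambda>i. f i t) ` F)))"
    using insert by (intro continuous_on_max) auto
  thus ?case using insert by simp
qed simp

lemma continuous_on_Min_finite:
  fixes f :: "'i \<Rightarrow> real \<Rightarrow> real"
  assumes "finite I" "I \<noteq> {}" "\<And>i. i \<in> I \<Longrightarrow> continuous_on T (f i)"
  shows "continuous_on T (\<lambda>t. Min ((\<lambda>i. f i t) ` I))"
  using assms
proof (induction I rule: finite_ne_induct)
  case (insert x F)
  have "continuous_on T (\<lambda>t. min (f x t) (Min ((\<lambda>i. f i t) ` F)))"
    using insert by (intro continuous_on_min) auto
  thus ?case using insert by simp
qed simp

definition splitting_line :: "(real \<times> real) set set \<Rightarrow> real \<Rightarrow> real \<Rightarrow> real \<Rightarrow> bool" where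
  "splitting_line A a b c \<longleftrightarrow>
     (\<exists>S. large_subset A S \<and> V S \<subseteq> halfplane_plus a b c) \<and>
     (\<exists>S. large_subset A S \<and> V S \<subseteq> halfplane_minus a b c)"

text \<open>Sweeping the direction (cos (pi t), sin (pi t)) over t \<in> [0,1] turns it into its opposite.
  upper_offset A t is the largest offset c for which some large subset has all vertices in the plus
  halfplane, lower_offset A t the smallest one for the minus halfplane.\<close>

definition height :: "real \<Rightarrow> real \<times> real \<Rightarrow> real" where
  "height t = normal_coord (cos (pi * t)) (sin (pi * t))"

definition upper_offset :: "(real \<times> real) set set \<Rightarrow> real \<Rightarrow> real" where
  "upper_offset A t = Max ((\<lambda>S. Min (height t ` V S)) ` Collect (large_subset A))"

definition lower_offset :: "(real \<times> real) set set \<Rightarrow> real \<Rightarrow> real" where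
  "lower_offset A t = Min ((\<lambda>S. Max (height t ` V S)) ` Collect (large_subset A))"

lemma direction_nonzero: "(cos (pi * t), sin (pi * t)) \<noteq> (0, 0)"
proof
  assume "(cos (pi * t), sin (pi * t)) = (0, 0)"
  hence "(sin (pi * t))\<^sup>2 + (cos (pi * t))\<^sup>2 = 0" by simp
  thus False using sin_cos_squared_add[of "pi * t"] by linarith
qed

lemma height_continuous: "continuous_on T (\<lambda>t. height t p)"
  unfolding height_def normal_coord_def by (intro continuous_intros)

lemma height_antipodal: "height 1 p = - height 0 p"
  by (simp add: height_def normal_coord_def)

text \<open>The offsets are well behaved as soon as every large subset has a vertex.\<close>

locale sweep =
  fixes A :: "(real \<times> real) set set"
  assumes finite_lines: "finite A" and lines: "\<forall>L\<in>A. is_line L"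
    and crossings: "\<And>S. large_subset A S \<Longrightarrow> V S \<noteq> {}"
begin

lemma large_subsets_finite: "finite (Collect (large_subset A))"
  by (rule finite_subset[of _ "Pow A"]) (auto simp: large_subset_def finite_lines)

lemma large_subsets_nonempty: "Collect (large_subset A) \<noteq> {}"
  using sqrt_le_self_nat by (auto simp: large_subset_def)

lemma V_large_finite: "large_subset A S \<Longrightarrow> finite (V S)"
  using lines finite_lines by (intro V_finite) (auto simp: large_subset_def intro: finite_subset)

lemma le_upper_offset_iff:
  "c \<le> upper_offset A t \<longleftrightarrow>
     (\<exists>S. large_subset A S \<and> V S \<subseteq> halfplane_plus (cos (pi * t)) (sin (pi * t)) c)"
  unfolding upper_offset_def using large_subsets_finite large_subsets_nonempty V_large_finite crossings
  by (auto simp: Max_ge_iff halfplane_plus_iff height_def subset_iff)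

lemma lower_offset_le_iff:
  "lower_offset A t \<le> c \<longleftrightarrow>
     (\<exists>S. large_subset A S \<and> V S \<subseteq> halfplane_minus (cos (pi * t)) (sin (pi * t)) c)"
  unfolding lower_offset_def using large_subsets_finite large_subsets_nonempty V_large_finite crossings
  by (auto simp: Min_le_iff halfplane_minus_iff height_def subset_iff)

lemma upper_offset_continuous: "continuous_on UNIV (upper_offset A)"
  unfolding upper_offset_def using large_subsets_finite large_subsets_nonempty V_large_finite crossings
  by (intro continuous_on_Max_finite continuous_on_Min_finite height_continuous) auto

lemma lower_offset_continuous: "continuous_on UNIV (lower_offset A)"
  unfolding lower_offset_def using large_subsets_finite large_subsets_nonempty V_large_finite crossings
  by (intro continuous_on_Max_finite continuous_on_Min_finite height_continuous) auto

text \<open>By the dichotomy the two offsets never cross.\<close>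

lemma lower_le_upper_offset: "lower_offset A t \<le> upper_offset A t"
proof (rule ccontr)
  assume gap: "\<not> lower_offset A t \<le> upper_offset A t"
  define c where "c = (upper_offset A t + lower_offset A t) / 2"
  have "\<not> c \<le> upper_offset A t" "\<not> lower_offset A t \<le> c"
    using gap unfolding c_def by auto
  thus False
    using dichotomy[OF finite_lines lines direction_nonzero, of t c]
    unfolding le_upper_offset_iff lower_offset_le_iff by blast
qed

lemma splitting_between:
  "lower_offset A t \<le> c \<Longrightarrow> c \<le> upper_offset A t \<Longrightarrow>
     splitting_line A (cos (pi * t)) (sin (pi * t)) c"
  unfolding splitting_line_def le_upper_offset_iff lower_offset_le_iff by blast

text \<open>At t = 1 the direction is reversed, which swaps the two halfplanes.\<close>

lemma upper_offset_antipodal: "upper_offset A 1 = - lower_offset A 0"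
proof -
  have "c \<le> upper_offset A 1 \<longleftrightarrow> c \<le> - lower_offset A 0" for c
    unfolding upper_offset_def lower_offset_def
    using large_subsets_finite large_subsets_nonempty V_large_finite crossings
    by (auto simp: Max_ge_iff Min_le_iff height_antipodal le_minus_iff)
  thus ?thesis by (meson order.antisym order_refl)
qed

lemma lower_offset_antipodal: "lower_offset A 1 = - upper_offset A 0"
proof -
  have "lower_offset A 1 \<le> c \<longleftrightarrow> - upper_offset A 0 \<le> c" for c
    unfolding upper_offset_def lower_offset_def
    using large_subsets_finite large_subsets_nonempty V_large_finite crossings
    by (auto simp: Max_ge_iff Min_le_iff height_antipodal minus_le_iff)
  thus ?thesis by (meson order.antisym order_refl)
qed

end

text \<open>For every finite family of lines the lines splitting it at angle t form a nonempty interval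
  of offsets, varying continuously and antipodally with t. (A large subset without vertices makes
  every line splitting, and any antipodal interval will do.)\<close>

lemma splitting_offsets:
  assumes "finite A" "\<forall>L\<in>A. is_line L"
  obtains lo up :: "real \<Rightarrow> real"
  where "continuous_on UNIV lo" "continuous_on UNIV up" "\<And>t. lo t \<le> up t"
    and "up 1 = - lo 0" "lo 1 = - up 0"
    and "\<And>t c. lo t \<le> c \<Longrightarrow> c \<le> up t \<Longrightarrow> splitting_line A (cos (pi * t)) (sin (pi * t)) c"
proof (cases "\<exists>S. large_subset A S \<and> V S = {}")
  case True
  hence everywhere: "splitting_line A (cos (pi * t)) (sin (pi * t)) c" for t c
    unfolding splitting_line_def by auto
  show thesis by (rule that[of "\<lambda>_. -1" "\<lambda>_. 1"]) (simp_all add: everywhere)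
next
  case False
  interpret sweep A
    using assms False by unfold_locales auto
  show thesis
    by (rule that[OF lower_offset_continuous upper_offset_continuous lower_le_upper_offset
          upper_offset_antipodal lower_offset_antipodal splitting_between])
qed

lemma zero_of_antisymmetric:
  fixes F :: "real \<Rightarrow> real"
  assumes "continuous_on {0..1} F" "F 1 = - F 0"
  obtains t where "F t = 0"
proof (cases "F 0 \<le> 0")
  case True
  thus thesis using IVT'[of F 0 0 1] assms that by auto
next
  case False
  thus thesis using IVT2'[of F 1 0 0] assms that by auto
qed

text \<open>Two continuously varying antipodal intervals share a point at some time: take a time at
  which their midpoints agree.\<close>

lemma antipodal_common_value:
  fixes lo1 up1 lo2 up2 :: "real \<Rightarrow> real"
  assumes cont: "continuous_on UNIV lo1" "continuous_on UNIV up1"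
      "continuous_on UNIV lo2" "continuous_on UNIV up2"
    and le: "\<And>t. lo1 t \<le> up1 t" "\<And>t. lo2 t \<le> up2 t"
    and antipodal: "up1 1 = - lo1 0" "lo1 1 = - up1 0" "up2 1 = - lo2 0" "lo2 1 = - up2 0"
  obtains t c where "lo1 t \<le> c" "c \<le> up1 t" "lo2 t \<le> c" "c \<le> up2 t"
proof -
  define F where "F t = (lo1 t + up1 t) - (lo2 t + up2 t)" for t
  have "continuous_on {0..1} F"
    unfolding F_def using cont by (intro continuous_intros) (auto intro: continuous_on_subset)
  moreover have "F 1 = - F 0" unfolding F_def using antipodal by simp
  ultimately obtain t where "F t = 0" by (rule zero_of_antisymmetric)
  hence "lo1 t \<le> (lo1 t + up1 t) / 2" "(lo1 t + up1 t) / 2 \<le> up1 t"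
    "lo2 t \<le> (lo1 t + up1 t) / 2" "(lo1 t + up1 t) / 2 \<le> up2 t"
    using le[of t] unfolding F_def by auto
  thus thesis by (rule that)
qed

lemma common_splitting_line:
  assumes "finite A1" "finite A2" "\<forall>L\<in>A1. is_line L" "\<forall>L\<in>A2. is_line L"
  obtains t c where "splitting_line A1 (cos (pi * t)) (sin (pi * t)) c"
    and "splitting_line A2 (cos (pi * t)) (sin (pi * t)) c"
proof -
  obtain lo1 up1 where bracket1: "continuous_on UNIV lo1" "continuous_on UNIV up1"
    "\<And>t. lo1 t \<le> up1 t" "up1 1 = - lo1 0" "lo1 1 = - up1 0"
    and split1: "\<And>t c. lo1 t \<le> c \<Longrightarrow> c \<le> up1 t \<Longrightarrow> splitting_line A1 (cos (pi * t)) (sin (pi * t)) c"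
    using splitting_offsets[OF assms(1,3)] by blast
  obtain lo2 up2 where bracket2: "continuous_on UNIV lo2" "continuous_on UNIV up2"
    "\<And>t. lo2 t \<le> up2 t" "up2 1 = - lo2 0" "lo2 1 = - up2 0"
    and split2: "\<And>t c. lo2 t \<le> c \<Longrightarrow> c \<le> up2 t \<Longrightarrow> splitting_line A2 (cos (pi * t)) (sin (pi * t)) c"
    using splitting_offsets[OF assms(2,4)] by blast
  obtain t c where "lo1 t \<le> c" "c \<le> up1 t" "lo2 t \<le> c" "c \<le> up2 t"
    using antipodal_common_value[OF bracket1(1,2) bracket2(1,2) bracket1(3) bracket2(3)
        bracket1(4,5) bracket2(4,5)] by blast
  thus thesis using split1 split2 that by blast
qed

theorem mainTheorem3:
  fixes A1 A2 :: "(real \<times> real) set set"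
  assumes "finite A1" and "finite A2"
    and "\<forall>L\<in>A1. is_line L" and "\<forall>L\<in>A2. is_line L"
  shows "\<exists>a b c. (a, b) \<noteq> (0, 0) \<and>
    (\<exists>A1p A1m A2p A2m.
       A1p \<subseteq> A1 \<and> A1m \<subseteq> A1 \<and> A2p \<subseteq> A2 \<and> A2m \<subseteq> A2 \<and>
       real (card A1p) \<ge> sqrt (real (card A1)) \<and>
       real (card A1m) \<ge> sqrt (real (card A1)) \<and>
       real (card A2p) \<ge> sqrt (real (card A2)) \<and>
       real (card A2m) \<ge> sqrt (real (card A2)) \<and>
       V A1p \<subseteq> halfplane_plus a b c \<and> V A1m \<subseteq> halfplane_minus a b c \<and>
       V A2p \<subseteq> halfplane_plus a b c \<and> V A2m \<subseteq> halfplane_minus a b c)"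
proof -
  obtain t c where "splitting_line A1 (cos (pi * t)) (sin (pi * t)) c"
    and "splitting_line A2 (cos (pi * t)) (sin (pi * t)) c"
    using common_splitting_line[OF assms] by blast
  then obtain P1 M1 P2 M2
    where "large_subset A1 P1" "V P1 \<subseteq> halfplane_plus (cos (pi * t)) (sin (pi * t)) c"
      and "large_subset A1 M1" "V M1 \<subseteq> halfplane_minus (cos (pi * t)) (sin (pi * t)) c"
      and "large_subset A2 P2" "V P2 \<subseteq> halfplane_plus (cos (pi * t)) (sin (pi * t)) c"
      and "large_subset A2 M2" "V M2 \<subseteq> halfplane_minus (cos (pi * t)) (sin (pi * t)) c"
    unfolding splitting_line_def by blast
  thus ?thesis
    unfolding large_subset_def
    by (intro exI[of _ "cos (pi * t)"] exI[of _ "sin (pi * t)"] exI[of _ c]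
        conjI[OF direction_nonzero] exI[of _ P1] exI[of _ M1] exI[of _ P2] exI[of _ M2]) simp
qed

end
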